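(* Fix $\alpha\in(0,1)$ and define, for $t\in\mathbb N^*$, \[ \gamma_0(t,\alpha)=\frac{t^2}{\left(\frac{\alpha^2}{t+1}\right)^{1/t}(t+1)-1}-t. \] Then, as $t\to\infty$, $\gamma_0(t,\alpha)=2\log(1/\alpha)+\log(t+1)+o(1)$. *)

theory Defs
  imports "HOL-Analysis.Analysis"
begin

definition gamma0 :: "nat \<Rightarrow> real \<Rightarrow> real" where
  "gamma0 t \<alpha> = (real t)^2 / ((\<alpha>^2 / (real t + 1)) powr (1 / real t) * (real t + 1) - 1) - real t"

end

theory Submission
  imports Defs "HOL-Real_Asymp.Real_Asymp"
begin

(* With c = ln (a^2/(x+1)) = O(ln x), the denominator is (x+1) exp (c/x) - 1 = x + c + O(ln^2 x / x),
   so x^2 / denominator - x = -c + o(1).  The expansion is done over the reals by real_asymp. *)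

lemma gamma0_real_asymptotics:
  fixes a :: real
  assumes "0 < a"
  shows "((\<lambda>x::real. x^2 / ((a^2 / (x + 1)) powr (1 / x) * (x + 1) - 1) - x
            - (2 * ln (1 / a) + ln (x + 1))) \<longlongrightarrow> 0) at_top"
  using assms by (real_asymp simp: ln_div ln_realpow)

theorem proposition1:
  fixes \<alpha> :: real
  assumes "0 < \<alpha>" and "\<alpha> < 1"
  shows "((\<lambda>t::nat. gamma0 t \<alpha> - (2 * ln (1 / \<alpha>) + ln (real t + 1))) \<longlongrightarrow> 0) at_top"
  unfolding gamma0_def
  using filterlim_compose[OF gamma0_real_asymptotics[OF assms(1)] filterlim_real_sequentially]
  by (simp add: o_def)

end
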